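(* Let $(A,\cdot,\circ)$ be a skew brace and $B$, $C$ sub-skew braces with $A = B\cdot C$. If either (a) $C$ is a trivial skew brace and a left ideal in $A$, or (b) $B$ is a trivial skew brace and a normal subgroup of $(A,\circ)$, then $B*C$ is a left ideal in $A$.
   Context: A skew brace is a set $A$ with two group operations $\cdot$ (often written by juxtaposition) and $\circ$ such that $a\circ(bc) = (a\circ b)\,a^{-1}\,(a\circ c)$ for all $a,b,c\in A$. $a^{-1}$ denotes the inverse in $(A,\cdot)$. Define $a*b = a^{-1}(a\circ b)b^{-1}$; for subsets $X,Y$, $X*Y$ is the subgroup of $(A,\cdot)$ generated by all $x*y$. A sub-skew brace is a subset that is a subgroup of both groups; it is trivial if $a\circ b=ab$ for all its elements. A subgroup $I$ of $(A,\cdot)$ is a left ideal in $A$ if $A*I\subseteq I$. $A=B\cdot C$ means every element is $bc$ with $b\in B$, $c\in C$. *)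

theory Defs
  imports "HOL-Algebra.Generated_Groups"
begin

definition skew_brace :: "'a monoid \<Rightarrow> 'a monoid \<Rightarrow> bool" where
  "skew_brace G H \<longleftrightarrow> group G \<and> group H \<and> carrier H = carrier G \<and>
     (\<forall>a\<in>carrier G. \<forall>b\<in>carrier G. \<forall>c\<in>carrier G.
        a \<otimes>\<^bsub>H\<^esub> (b \<otimes>\<^bsub>G\<^esub> c) =
        (a \<otimes>\<^bsub>H\<^esub> b) \<otimes>\<^bsub>G\<^esub> inv\<^bsub>G\<^esub> a \<otimes>\<^bsub>G\<^esub> (a \<otimes>\<^bsub>H\<^esub> c))"

definition brace_star :: "'a monoid \<Rightarrow> 'a monoid \<Rightarrow> 'a \<Rightarrow> 'a \<Rightarrow> 'a" where
  "brace_star G H a b = inv\<^bsub>G\<^esub> a \<otimes>\<^bsub>G\<^esub> (a \<otimes>\<^bsub>H\<^esub> b) \<otimes>\<^bsub>G\<^esub> inv\<^bsub>G\<^esub> b"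

definition brace_star_set :: "'a monoid \<Rightarrow> 'a monoid \<Rightarrow> 'a set \<Rightarrow> 'a set \<Rightarrow> 'a set" where
  "brace_star_set G H S T = generate G {z. \<exists>x\<in>S. \<exists>y\<in>T. z = brace_star G H x y}"

definition sub_skew_brace :: "'a monoid \<Rightarrow> 'a monoid \<Rightarrow> 'a set \<Rightarrow> bool" where
  "sub_skew_brace G H B \<longleftrightarrow> subgroup B G \<and> subgroup B H"

definition trivial_on :: "'a monoid \<Rightarrow> 'a monoid \<Rightarrow> 'a set \<Rightarrow> bool" where
  "trivial_on G H B \<longleftrightarrow> (\<forall>a\<in>B. \<forall>b\<in>B. a \<otimes>\<^bsub>H\<^esub> b = a \<otimes>\<^bsub>G\<^esub> b)"

definition left_ideal :: "'a monoid \<Rightarrow> 'a monoid \<Rightarrow> 'a set \<Rightarrow> bool" where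
  "left_ideal G H I \<longleftrightarrow> subgroup I G \<and> brace_star_set G H (carrier G) I \<subseteq> I"

end

theory Submission
  imports Defs
begin

text \<open>Everything goes through the map \<open>lam a x = a\<^sup>-\<^sup>1 (a \<circ> x)\<close> (the paper's \<open>\<lambda>\<^sub>a\<close>), a
  homomorphism from \<open>(A,\<circ>)\<close> into the automorphisms of \<open>(A,\<cdot>)\<close> with \<open>a * x = \<lambda>\<^sub>a(x) x\<^sup>-\<^sup>1\<close>.
  A subgroup of \<open>(A,\<cdot>)\<close> is thus a left ideal iff it is \<open>\<lambda>\<close>-invariant, and since each \<open>\<lambda>\<^sub>a\<close>
  is multiplicative it suffices to show \<open>\<lambda>\<^sub>a(b * c) \<in> B * C\<close> for \<open>b \<in> B\<close>, \<open>c \<in> C\<close>, using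
  \<open>\<lambda>\<^sub>a(b * c) = ((a \<circ> b) * c) (a * c)\<^sup>-\<^sup>1\<close>.
  In case (a), writing \<open>a = b\<^sub>1 \<circ> c\<^sub>1\<close> and \<open>c\<^sub>1 \<circ> b = b\<^sub>2 \<circ> c\<^sub>2\<close>, triviality of \<open>C\<close> gives
  \<open>\<lambda>\<^sub>a(b * c) = ((b\<^sub>1 \<circ> b\<^sub>2) * c) (b\<^sub>1 * c)\<^sup>-\<^sup>1\<close>.
  In case (b), writing \<open>a \<circ> b = b' \<circ> a\<close> with \<open>b' \<in> B\<close> by normality and \<open>\<lambda>\<^sub>a(c)\<^sup>-\<^sup>1 = b'' c''\<close>,
  triviality of \<open>B\<close> gives \<open>\<lambda>\<^sub>a(b * c) = b' * c''\<^sup>-\<^sup>1\<close>.\<close>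

locale skew_brace_structure = G: group G + H: group H for G H :: "'a monoid" +
  assumes carrier_eq: "carrier H = carrier G"
    and brace_law: "\<And>a b c. a \<in> carrier G \<Longrightarrow> b \<in> carrier G \<Longrightarrow> c \<in> carrier G \<Longrightarrow>
      a \<otimes>\<^bsub>H\<^esub> (b \<otimes>\<^bsub>G\<^esub> c) = (a \<otimes>\<^bsub>H\<^esub> b) \<otimes>\<^bsub>G\<^esub> inv\<^bsub>G\<^esub> a \<otimes>\<^bsub>G\<^esub> (a \<otimes>\<^bsub>H\<^esub> c)"

lemma skew_brace_structureI: "skew_brace G H \<Longrightarrow> skew_brace_structure G H"
  unfolding skew_brace_def by (intro skew_brace_structure.intro skew_brace_structure_axioms.intro) auto

context skew_brace_structure
begin

definition lam :: "'a \<Rightarrow> 'a \<Rightarrow> 'a" where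
  "lam a x = inv\<^bsub>G\<^esub> a \<otimes>\<^bsub>G\<^esub> (a \<otimes>\<^bsub>H\<^esub> x)"

lemma circ_closed [intro, simp]: "a \<in> carrier G \<Longrightarrow> b \<in> carrier G \<Longrightarrow> a \<otimes>\<^bsub>H\<^esub> b \<in> carrier G"
  using H.m_closed carrier_eq by auto

lemma lam_closed [intro, simp]: "a \<in> carrier G \<Longrightarrow> x \<in> carrier G \<Longrightarrow> lam a x \<in> carrier G"
  unfolding lam_def by auto

lemma inv_mult_cancel: "z \<in> carrier G \<Longrightarrow> y \<in> carrier G \<Longrightarrow> inv\<^bsub>G\<^esub> z \<otimes>\<^bsub>G\<^esub> (z \<otimes>\<^bsub>G\<^esub> y) = y"
  by (simp add: G.m_assoc[symmetric])

lemma mult_inv_cancel: "z \<in> carrier G \<Longrightarrow> y \<in> carrier G \<Longrightarrow> z \<otimes>\<^bsub>G\<^esub> (inv\<^bsub>G\<^esub> z \<otimes>\<^bsub>G\<^esub> y) = y"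
  by (simp add: G.m_assoc[symmetric])

lemma lam_mult:
  "a \<in> carrier G \<Longrightarrow> x \<in> carrier G \<Longrightarrow> y \<in> carrier G \<Longrightarrow>
    lam a (x \<otimes>\<^bsub>G\<^esub> y) = lam a x \<otimes>\<^bsub>G\<^esub> lam a y"
  unfolding lam_def using brace_law[of a x y] by (auto simp: G.m_assoc)

lemma lam_one: 
  assumes "a \<in> carrier G"
  shows "lam a \<one>\<^bsub>G\<^esub> = \<one>\<^bsub>G\<^esub>"
proof -
  have "lam a \<one>\<^bsub>G\<^esub> \<otimes>\<^bsub>G\<^esub> lam a \<one>\<^bsub>G\<^esub> = lam a \<one>\<^bsub>G\<^esub> \<otimes>\<^bsub>G\<^esub> \<one>\<^bsub>G\<^esub>"
    using lam_mult[of a "\<one>\<^bsub>G\<^esub>" "\<one>\<^bsub>G\<^esub>"] assms by auto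
  then show ?thesis
    using assms by (metis G.one_closed G.l_cancel_one G.r_one lam_closed)
qed

lemma lam_inv: "a \<in> carrier G \<Longrightarrow> x \<in> carrier G \<Longrightarrow> lam a (inv\<^bsub>G\<^esub> x) = inv\<^bsub>G\<^esub> (lam a x)"
  using lam_mult[of a x "inv\<^bsub>G\<^esub> x"] lam_one[of a]
  by (metis G.inv_closed G.inv_equality G.inv_inv G.r_inv lam_closed)

lemma circ_one: "a \<in> carrier G \<Longrightarrow> a \<otimes>\<^bsub>H\<^esub> \<one>\<^bsub>G\<^esub> = a"
  using lam_one[of a] unfolding lam_def
  by (metis G.inv_closed G.inv_equality G.inv_inv G.one_closed circ_closed)

lemma one_eq: "\<one>\<^bsub>H\<^esub> = \<one>\<^bsub>G\<^esub>"
  using circ_one[of "\<one>\<^bsub>H\<^esub>"] carrier_eq H.l_one[of "\<one>\<^bsub>G\<^esub>"] H.one_closed by auto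

lemma circ_eq_mult_lam: "a \<in> carrier G \<Longrightarrow> x \<in> carrier G \<Longrightarrow> a \<otimes>\<^bsub>H\<^esub> x = a \<otimes>\<^bsub>G\<^esub> lam a x"
  unfolding lam_def by (auto simp: G.m_assoc[symmetric])

lemma lam_one_left: "x \<in> carrier G \<Longrightarrow> lam \<one>\<^bsub>G\<^esub> x = x"
  unfolding lam_def using one_eq carrier_eq H.l_one by (metis G.inv_one G.l_one)

lemma lam_circ:
  assumes a: "a \<in> carrier G" and b: "b \<in> carrier G" and x: "x \<in> carrier G"
  shows "lam (a \<otimes>\<^bsub>H\<^esub> b) x = lam a (lam b x)"
proof -
  have "lam a (lam b x) = lam a (inv\<^bsub>G\<^esub> b) \<otimes>\<^bsub>G\<^esub> lam a (b \<otimes>\<^bsub>H\<^esub> x)"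
    unfolding lam_def[of b x] using lam_mult a b x by auto
  also have "\<dots> = inv\<^bsub>G\<^esub> (inv\<^bsub>G\<^esub> a \<otimes>\<^bsub>G\<^esub> (a \<otimes>\<^bsub>H\<^esub> b)) \<otimes>\<^bsub>G\<^esub>
      (inv\<^bsub>G\<^esub> a \<otimes>\<^bsub>G\<^esub> (a \<otimes>\<^bsub>H\<^esub> (b \<otimes>\<^bsub>H\<^esub> x)))"
    using lam_inv a b x unfolding lam_def by auto
  also have "\<dots> = inv\<^bsub>G\<^esub> (a \<otimes>\<^bsub>H\<^esub> b) \<otimes>\<^bsub>G\<^esub> (a \<otimes>\<^bsub>H\<^esub> (b \<otimes>\<^bsub>H\<^esub> x))"
    using a b x by (auto simp: G.inv_mult_group G.m_assoc inv_mult_cancel mult_inv_cancel)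
  also have "\<dots> = lam (a \<otimes>\<^bsub>H\<^esub> b) x"
    unfolding lam_def using a b x carrier_eq by (simp add: H.m_assoc)
  finally show ?thesis by simp
qed

lemma star_eq_lam: "brace_star G H a b = lam a b \<otimes>\<^bsub>G\<^esub> inv\<^bsub>G\<^esub> b"
  unfolding brace_star_def lam_def ..

lemma star_closed [intro, simp]: "a \<in> carrier G \<Longrightarrow> b \<in> carrier G \<Longrightarrow> brace_star G H a b \<in> carrier G"
  unfolding star_eq_lam by auto

lemma lam_star:
  "a \<in> carrier G \<Longrightarrow> b \<in> carrier G \<Longrightarrow> c \<in> carrier G \<Longrightarrow>
    lam a (brace_star G H b c) = brace_star G H (a \<otimes>\<^bsub>H\<^esub> b) c \<otimes>\<^bsub>G\<^esub> inv\<^bsub>G\<^esub> (brace_star G H a c)"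
  unfolding star_eq_lam using lam_mult lam_inv lam_circ
  by (auto simp: G.inv_mult_group G.m_assoc inv_mult_cancel mult_inv_cancel)

lemma lam_trivial:
  "trivial_on G H X \<Longrightarrow> X \<subseteq> carrier G \<Longrightarrow> x \<in> X \<Longrightarrow> y \<in> X \<Longrightarrow> lam x y = y"
  unfolding trivial_on_def lam_def by (simp add: inv_mult_cancel subsetD)

lemma left_ideal_iff_lam_closed:
  assumes I: "subgroup I G"
  shows "left_ideal G H I \<longleftrightarrow> (\<forall>a\<in>carrier G. \<forall>x\<in>I. lam a x \<in> I)"
proof
  assume li: "left_ideal G H I"
  show "\<forall>a\<in>carrier G. \<forall>x\<in>I. lam a x \<in> I"
  proof (intro ballI)
    fix a x assume a: "a \<in> carrier G" and x: "x \<in> I"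
    have xG: "x \<in> carrier G" using x subgroup.subset[OF I] by auto
    have "brace_star G H a x \<in> I"
      using li a x unfolding left_ideal_def brace_star_set_def by (blast intro: generate.incl)
    then have "brace_star G H a x \<otimes>\<^bsub>G\<^esub> x \<in> I" using subgroup.m_closed[OF I _ x] by blast
    then show "lam a x \<in> I"
      unfolding star_eq_lam using a xG by (auto simp: G.m_assoc)
  qed
next
  assume inv: "\<forall>a\<in>carrier G. \<forall>x\<in>I. lam a x \<in> I"
  have "brace_star_set G H (carrier G) I \<subseteq> I"
    unfolding brace_star_set_def
  proof (rule G.generate_subgroup_incl[OF _ I], safe)
    fix a x assume "a \<in> carrier G" "x \<in> I"
    then show "brace_star G H a x \<in> I"
      unfolding star_eq_lam using inv subgroup.m_closed[OF I] subgroup.m_inv_closed[OF I] by blast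
  qed
  then show "left_ideal G H I" unfolding left_ideal_def using I by simp
qed

lemma lam_generate:
  assumes S: "S \<subseteq> carrier G" and a: "a \<in> carrier G"
    and gens: "\<And>s. s \<in> S \<Longrightarrow> lam a s \<in> generate G S"
    and x: "x \<in> generate G S"
  shows "lam a x \<in> generate G S"
  using x
proof (induction x rule: generate.induct)
  case one
  then show ?case using lam_one a generate.one by metis
next
  case (incl s)
  then show ?case using gens by blast
next
  case (inv s)
  then show ?case
    using gens a lam_inv S subgroup.m_inv_closed[OF G.generate_is_subgroup[OF S]] by auto
next
  case (eng x y)
  then show ?case using lam_mult a G.generate_in_carrier[OF S] generate.eng by metis
qed

lemma star_in_star_set: "x \<in> X \<Longrightarrow> y \<in> Y \<Longrightarrow> brace_star G H x y \<in> brace_star_set G H X Y"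
  unfolding brace_star_set_def by (blast intro: generate.incl)

lemma star_set_subgroup:
  "X \<subseteq> carrier G \<Longrightarrow> Y \<subseteq> carrier G \<Longrightarrow> subgroup (brace_star_set G H X Y) G"
  unfolding brace_star_set_def by (rule G.generate_is_subgroup) blast

lemma star_set_left_ideal:
  assumes X: "X \<subseteq> carrier G" and Y: "Y \<subseteq> carrier G"
    and gens: "\<And>a x y. a \<in> carrier G \<Longrightarrow> x \<in> X \<Longrightarrow> y \<in> Y \<Longrightarrow>
      lam a (brace_star G H x y) \<in> brace_star_set G H X Y"
  shows "left_ideal G H (brace_star_set G H X Y)"
  unfolding left_ideal_iff_lam_closed[OF star_set_subgroup[OF X Y]]
proof (intro ballI)
  fix a z assume a: "a \<in> carrier G" and z: "z \<in> brace_star_set G H X Y"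
  let ?S = "{w. \<exists>x\<in>X. \<exists>y\<in>Y. w = brace_star G H x y}"
  have S: "?S \<subseteq> carrier G" using X Y by auto
  have "lam a s \<in> generate G ?S" if "s \<in> ?S" for s
    using that gens[OF a] unfolding brace_star_set_def by blast
  then show "lam a z \<in> brace_star_set G H X Y"
    using lam_generate[OF S a] z unfolding brace_star_set_def by blast
qed

text \<open>The factorisation \<open>A = B \<cdot> C\<close> becomes \<open>A = B \<circ> C\<close> as soon as \<open>C\<close> is \<open>\<lambda>\<close>-invariant,
  because \<open>b c = b \<circ> \<lambda>\<^bsub>b\<^sup>-\<^sup>1\<^esub>(c)\<close> with \<open>b\<^sup>-\<^sup>1\<close> the inverse in \<open>(A,\<circ>)\<close>.\<close>
lemma circ_factorisation:
  assumes fac: "carrier G = B <#>\<^bsub>G\<^esub> C" and B: "B \<subseteq> carrier G" and C: "C \<subseteq> carrier G"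
    and lamC: "\<And>a c. a \<in> carrier G \<Longrightarrow> c \<in> C \<Longrightarrow> lam a c \<in> C"
    and a: "a \<in> carrier G"
  obtains b c where "b \<in> B" "c \<in> C" "a = b \<otimes>\<^bsub>H\<^esub> c"
proof -
  obtain b c where b: "b \<in> B" and c: "c \<in> C" and ae: "a = b \<otimes>\<^bsub>G\<^esub> c"
    using a fac unfolding set_mult_def by auto
  have bG: "b \<in> carrier G" and cG: "c \<in> carrier G" using b c B C by auto
  have b'G: "inv\<^bsub>H\<^esub> b \<in> carrier G" using bG carrier_eq by auto
  have "lam b (lam (inv\<^bsub>H\<^esub> b) c) = c"
    using lam_circ[OF bG b'G cG] lam_one_left[OF cG] one_eq carrier_eq bG by simp
  then have "b \<otimes>\<^bsub>H\<^esub> lam (inv\<^bsub>H\<^esub> b) c = a"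
    using circ_eq_mult_lam[of b "lam (inv\<^bsub>H\<^esub> b) c"] bG b'G cG ae by simp
  then show ?thesis using that b lamC[OF b'G c] by metis
qed

lemma lam_star_mem_if_trivial_left_ideal:
  assumes BH: "subgroup B H" and CG: "subgroup C G"
    and fac: "carrier G = B <#>\<^bsub>G\<^esub> C"
    and triv: "trivial_on G H C" and li: "left_ideal G H C"
    and a: "a \<in> carrier G" and b: "b \<in> B" and c: "c \<in> C"
  shows "lam a (brace_star G H b c) \<in> brace_star_set G H B C"
proof -
  have B: "B \<subseteq> carrier G" using subgroup.subset[OF BH] carrier_eq by auto
  have C: "C \<subseteq> carrier G" using subgroup.subset[OF CG] .
  have bG: "b \<in> carrier G" and cG: "c \<in> carrier G" using b c B C by auto
  have lamC: "\<And>a c. a \<in> carrier G \<Longrightarrow> c \<in> C \<Longrightarrow> lam a c \<in> C"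
    using li left_ideal_iff_lam_closed[OF CG] by blast
  have star_circ: "brace_star G H (b' \<otimes>\<^bsub>H\<^esub> c') c = brace_star G H b' c"
    if "b' \<in> B" "c' \<in> C" for b' c'
    unfolding star_eq_lam using that lam_circ[of b' c' c] lam_trivial[OF triv C, of c' c] B C c
    by (simp add: subsetD)
  obtain b1 c1 where b1: "b1 \<in> B" and c1: "c1 \<in> C" and ae: "a = b1 \<otimes>\<^bsub>H\<^esub> c1"
    using circ_factorisation[OF fac B C lamC a] .
  obtain b2 c2 where b2: "b2 \<in> B" and c2: "c2 \<in> C" and e2: "c1 \<otimes>\<^bsub>H\<^esub> b = b2 \<otimes>\<^bsub>H\<^esub> c2"
    using circ_factorisation[OF fac B C lamC, of "c1 \<otimes>\<^bsub>H\<^esub> b"] c1 C bG by blast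
  have b1G: "b1 \<in> carrier G" and c1G: "c1 \<in> carrier G" and b2G: "b2 \<in> carrier G"
    using b1 c1 b2 B C by auto
  have "brace_star G H c1 c = \<one>\<^bsub>G\<^esub>"
    unfolding star_eq_lam using lam_trivial[OF triv C c1 c] cG by simp
  then have "lam c1 (brace_star G H b c) = brace_star G H b2 c"
    using lam_star[of c1 b c] c1G bG cG e2 star_circ[OF b2 c2] b2G by simp
  then have "lam a (brace_star G H b c) = lam b1 (brace_star G H b2 c)"
    using ae lam_circ[of b1 c1 "brace_star G H b c"] b1G c1G bG cG by simp
  also have "\<dots> = brace_star G H (b1 \<otimes>\<^bsub>H\<^esub> b2) c \<otimes>\<^bsub>G\<^esub> inv\<^bsub>G\<^esub> brace_star G H b1 c"
    using lam_star b1G b2G cG by simp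
  finally have "lam a (brace_star G H b c) =
      brace_star G H (b1 \<otimes>\<^bsub>H\<^esub> b2) c \<otimes>\<^bsub>G\<^esub> inv\<^bsub>G\<^esub> brace_star G H b1 c" .
  moreover have "b1 \<otimes>\<^bsub>H\<^esub> b2 \<in> B" using subgroup.m_closed[OF BH b1 b2] .
  ultimately show ?thesis
    using star_set_subgroup[OF B C] star_in_star_set b1 c
    by (metis subgroup.m_closed subgroup.m_inv_closed)
qed

lemma lam_star_mem_if_trivial_normal:
  assumes BG: "subgroup B G" and CG: "subgroup C G"
    and fac: "carrier G = B <#>\<^bsub>G\<^esub> C"
    and triv: "trivial_on G H B" and normal: "B \<lhd> H"
    and a: "a \<in> carrier G" and b: "b \<in> B" and c: "c \<in> C"
  shows "lam a (brace_star G H b c) \<in> brace_star_set G H B C"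
proof -
  have B: "B \<subseteq> carrier G" using subgroup.subset[OF BG] .
  have C: "C \<subseteq> carrier G" using subgroup.subset[OF CG] .
  have bG: "b \<in> carrier G" and cG: "c \<in> carrier G" using b c B C by auto
  define b' where "b' = a \<otimes>\<^bsub>H\<^esub> b \<otimes>\<^bsub>H\<^esub> inv\<^bsub>H\<^esub> a"
  have b': "b' \<in> B"
    unfolding b'_def using normal.inv_op_closed2[OF normal] a b carrier_eq by auto
  have b'G: "b' \<in> carrier G" using b' B by auto
  have conj: "b' \<otimes>\<^bsub>H\<^esub> a = a \<otimes>\<^bsub>H\<^esub> b"
    unfolding b'_def using a bG carrier_eq
    by (metis H.m_assoc H.inv_closed H.m_closed H.l_inv H.r_one)
  define y where "y = lam a c"
  have yG: "y \<in> carrier G" unfolding y_def using a cG by auto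
  have lam_a_star: "lam a (brace_star G H b c) = lam b' y \<otimes>\<^bsub>G\<^esub> inv\<^bsub>G\<^esub> y"
    using lam_star[of a b c] a bG cG conj[symmetric] lam_circ[of b' a c] b'G
    unfolding star_eq_lam y_def
    by (simp add: G.inv_mult_group G.m_assoc inv_mult_cancel mult_inv_cancel)
  obtain b'' c'' where b'': "b'' \<in> B" and c'': "c'' \<in> C"
      and ye: "inv\<^bsub>G\<^esub> y = b'' \<otimes>\<^bsub>G\<^esub> c''"
    using fac yG G.inv_closed unfolding set_mult_def by (metis (no_types, lifting) UN_E singletonD)
  have b''G: "b'' \<in> carrier G" and c''G: "c'' \<in> carrier G" using b'' c'' B C by auto
  have y_eq: "y = inv\<^bsub>G\<^esub> c'' \<otimes>\<^bsub>G\<^esub> inv\<^bsub>G\<^esub> b''"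
    using ye yG b''G c''G by (metis G.inv_inv G.inv_mult_group)
  have "lam b' (inv\<^bsub>G\<^esub> b'') = inv\<^bsub>G\<^esub> b''"
    using lam_trivial[OF triv B b' subgroup.m_inv_closed[OF BG b'']] .
  then have "lam b' y \<otimes>\<^bsub>G\<^esub> inv\<^bsub>G\<^esub> y = brace_star G H b' (inv\<^bsub>G\<^esub> c'')"
    unfolding star_eq_lam y_eq using lam_mult b'G b''G c''G
    by (simp add: G.inv_mult_group G.m_assoc inv_mult_cancel mult_inv_cancel)
  then show ?thesis
    using lam_a_star star_in_star_set[OF b' subgroup.m_inv_closed[OF CG c'']] by simp
qed

end

theorem proposition3p2:
  fixes G H :: "'a monoid" and B C :: "'a set"
  assumes "skew_brace G H"
    and "sub_skew_brace G H B" and "sub_skew_brace G H C"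
    and "carrier G = B <#>\<^bsub>G\<^esub> C"
    and "(trivial_on G H C \<and> left_ideal G H C) \<or> (trivial_on G H B \<and> B \<lhd> H)"
  shows "left_ideal G H (brace_star_set G H B C)"
proof -
  interpret skew_brace_structure G H using skew_brace_structureI[OF assms(1)] .
  have BG: "subgroup B G" and BH: "subgroup B H" and CG: "subgroup C G"
    using assms(2,3) unfolding sub_skew_brace_def by auto
  show ?thesis
  proof (rule star_set_left_ideal)
    show "B \<subseteq> carrier G" "C \<subseteq> carrier G" using BG CG subgroup.subset by auto
    fix a b c assume abc: "a \<in> carrier G" "b \<in> B" "c \<in> C"
    from assms(5) show "lam a (brace_star G H b c) \<in> brace_star_set G H B C"
    proof (elim disjE conjE)
      assume "trivial_on G H C" and "left_ideal G H C"
      from lam_star_mem_if_trivial_left_ideal[OF BH CG assms(4) this abc] show ?thesis .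
    next
      assume "trivial_on G H B" and "B \<lhd> H"
      from lam_star_mem_if_trivial_normal[OF BG CG assms(4) this abc] show ?thesis .
    qed
  qed
qed

end
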